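(* The functor $i:\overline{\mathrm{Pro}}(\mathcal{C})\to \mathrm{Pro}(\mathcal{C})$ is full.
   Context: Let $\mathcal{C}$ be a category. $\mathrm{Pro}(\mathcal{C})$ has objects diagrams $I\to\mathcal{C}$ with $I$ small directed and $\mathrm{Hom}(X,Y)=\lim_s\operatorname{colim}_t\mathrm{Hom}_{\mathcal{C}}(X_t,Y_s)$. $\overline{\mathrm{Pro}}(\mathcal{C})$ has objects $F:A\to\mathcal{C}$ with $A$ a cofinite directed poset of infinite height (poset as category with $u\to v$ iff $u\ge v$), and morphisms $F^A\to G^B$ the connected components $[\alpha,\phi]$ of the poset of pairs $(\alpha,\phi)$, $\alpha:B\to A$ strictly increasing, $\phi:F\circ\alpha\to G$ natural, ordered by $(\alpha',\phi')\ge(\alpha,\phi)$ iff $\alpha'\ge\alpha$ pointwise and $\phi'_b=\phi_b\circ F(\alpha'(b)\to\alpha(b))$. The functor $i$ is the identity on objects and sends $[\alpha,\phi]$ to the pro-morphism represented by the maps $\phi_b:F_{\alpha(b)}\to G_b$, $b\in B$. *)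

theory Defs
  imports Main
begin

record ('o, 'm) cat =
  Obj  :: "'o set"
  Mor  :: "'m set"
  Dom  :: "'m \<Rightarrow> 'o"
  Cod  :: "'m \<Rightarrow> 'o"
  Comp :: "'m \<Rightarrow> 'm \<Rightarrow> 'm"   (* Comp C g f = g \<circ> f *)
  Ide  :: "'o \<Rightarrow> 'm"

definition hom :: "('o, 'm) cat \<Rightarrow> 'o \<Rightarrow> 'o \<Rightarrow> 'm set" where
  "hom C x y = {f \<in> Mor C. Dom C f = x \<and> Cod C f = y}"

definition is_category :: "('o, 'm) cat \<Rightarrow> bool" where
  "is_category C \<longleftrightarrow>
     (\<forall>f\<in>Mor C. Dom C f \<in> Obj C \<and> Cod C f \<in> Obj C) \<and>
     (\<forall>x\<in>Obj C. Ide C x \<in> hom C x x) \<and>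
     (\<forall>f\<in>Mor C. Comp C f (Ide C (Dom C f)) = f \<and> Comp C (Ide C (Cod C f)) f = f) \<and>
     (\<forall>f\<in>Mor C. \<forall>g\<in>Mor C. Cod C f = Dom C g \<longrightarrow> Comp C g f \<in> hom C (Dom C f) (Cod C g)) \<and>
     (\<forall>f\<in>Mor C. \<forall>g\<in>Mor C. \<forall>h\<in>Mor C. Cod C f = Dom C g \<and> Cod C g = Dom C h \<longrightarrow>
         Comp C h (Comp C g f) = Comp C (Comp C h g) f)"

definition is_poset :: "'a set \<Rightarrow> ('a \<Rightarrow> 'a \<Rightarrow> bool) \<Rightarrow> bool" where
  "is_poset A le \<longleftrightarrow>
     (\<forall>u\<in>A. le u u) \<and>
     (\<forall>u\<in>A. \<forall>v\<in>A. le u v \<and> le v u \<longrightarrow> u = v) \<and>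
     (\<forall>u\<in>A. \<forall>v\<in>A. \<forall>w\<in>A. le u v \<and> le v w \<longrightarrow> le u w)"

definition strict :: "('a \<Rightarrow> 'a \<Rightarrow> bool) \<Rightarrow> 'a \<Rightarrow> 'a \<Rightarrow> bool" where
  "strict le u v \<longleftrightarrow> le u v \<and> u \<noteq> v"

definition cofinite_poset :: "'a set \<Rightarrow> ('a \<Rightarrow> 'a \<Rightarrow> bool) \<Rightarrow> bool" where
  "cofinite_poset A le \<longleftrightarrow> (\<forall>v\<in>A. finite {u\<in>A. le u v})"

definition directed_poset :: "'a set \<Rightarrow> ('a \<Rightarrow> 'a \<Rightarrow> bool) \<Rightarrow> bool" where
  "directed_poset A le \<longleftrightarrow> A \<noteq> {} \<and> (\<forall>u\<in>A. \<forall>v\<in>A. \<exists>w\<in>A. le u w \<and> le v w)"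

definition infinite_height :: "'a set \<Rightarrow> ('a \<Rightarrow> 'a \<Rightarrow> bool) \<Rightarrow> bool" where
  "infinite_height A le \<longleftrightarrow>
     (\<forall>n::nat. \<exists>c::nat \<Rightarrow> 'a. (\<forall>i\<le>n. c i \<in> A) \<and> (\<forall>i<n. strict le (c i) (c (Suc i))))"

text \<open>A functor F : A \<rightarrow> C is given by an object map Fo and a morphism map Fm,
  where Fm u v : Fo u \<rightarrow> Fo v is the image of the arrow u \<rightarrow> v (for v \<le> u).\<close>
definition is_diagram ::
  "('o, 'm) cat \<Rightarrow> 'a set \<Rightarrow> ('a \<Rightarrow> 'a \<Rightarrow> bool) \<Rightarrow> ('a \<Rightarrow> 'o) \<Rightarrow> ('a \<Rightarrow> 'a \<Rightarrow> 'm) \<Rightarrow> bool" where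
  "is_diagram C A le Fo Fm \<longleftrightarrow>
     (\<forall>u\<in>A. Fo u \<in> Obj C) \<and>
     (\<forall>u\<in>A. \<forall>v\<in>A. le v u \<longrightarrow> Fm u v \<in> hom C (Fo u) (Fo v)) \<and>
     (\<forall>u\<in>A. Fm u u = Ide C (Fo u)) \<and>
     (\<forall>u\<in>A. \<forall>v\<in>A. \<forall>w\<in>A. le v u \<and> le w v \<longrightarrow> Fm u w = Comp C (Fm v w) (Fm u v))"

definition probar_obj ::
  "('o, 'm) cat \<Rightarrow> 'a set \<Rightarrow> ('a \<Rightarrow> 'a \<Rightarrow> bool) \<Rightarrow> ('a \<Rightarrow> 'o) \<Rightarrow> ('a \<Rightarrow> 'a \<Rightarrow> 'm) \<Rightarrow> bool" where
  "probar_obj C A le Fo Fm \<longleftrightarrow>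
     is_poset A le \<and> cofinite_poset A le \<and> directed_poset A le \<and> infinite_height A le \<and>
     is_diagram C A le Fo Fm"

text \<open>Representatives of colim_t Hom(F_t, y).\<close>
definition colim_set ::
  "('o, 'm) cat \<Rightarrow> 'a set \<Rightarrow> ('a \<Rightarrow> 'o) \<Rightarrow> 'o \<Rightarrow> ('a \<times> 'm) set" where
  "colim_set C A Fo y = {(t, f). t \<in> A \<and> f \<in> hom C (Fo t) y}"

definition colim_rel ::
  "('o, 'm) cat \<Rightarrow> 'a set \<Rightarrow> ('a \<Rightarrow> 'a \<Rightarrow> bool) \<Rightarrow> ('a \<Rightarrow> 'a \<Rightarrow> 'm) \<Rightarrow> ('a \<times> 'm) \<Rightarrow> ('a \<times> 'm) \<Rightarrow> bool" where
  "colim_rel C A le Fm p q \<longleftrightarrow>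
     (\<exists>t''\<in>A. le (fst p) t'' \<and> le (fst q) t'' \<and>
        Comp C (snd p) (Fm t'' (fst p)) = Comp C (snd q) (Fm t'' (fst q)))"

definition colim_class ::
  "('o, 'm) cat \<Rightarrow> 'a set \<Rightarrow> ('a \<Rightarrow> 'a \<Rightarrow> bool) \<Rightarrow> ('a \<Rightarrow> 'o) \<Rightarrow> ('a \<Rightarrow> 'a \<Rightarrow> 'm) \<Rightarrow> 'o
     \<Rightarrow> ('a \<times> 'm) \<Rightarrow> ('a \<times> 'm) set" where
  "colim_class C A le Fo Fm y p = {q \<in> colim_set C A Fo y. colim_rel C A le Fm q p}"

definition colim_hom ::
  "('o, 'm) cat \<Rightarrow> 'a set \<Rightarrow> ('a \<Rightarrow> 'a \<Rightarrow> bool) \<Rightarrow> ('a \<Rightarrow> 'o) \<Rightarrow> ('a \<Rightarrow> 'a \<Rightarrow> 'm) \<Rightarrow> 'o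
     \<Rightarrow> ('a \<times> 'm) set set" where
  "colim_hom C A le Fo Fm y = colim_class C A le Fo Fm y ` colim_set C A Fo y"

definition colim_post ::
  "('o, 'm) cat \<Rightarrow> 'a set \<Rightarrow> ('a \<Rightarrow> 'a \<Rightarrow> bool) \<Rightarrow> ('a \<Rightarrow> 'o) \<Rightarrow> ('a \<Rightarrow> 'a \<Rightarrow> 'm) \<Rightarrow> 'o
     \<Rightarrow> 'm \<Rightarrow> ('a \<times> 'm) set \<Rightarrow> ('a \<times> 'm) set" where
  "colim_post C A le Fo Fm z h X =
     (\<Union>p\<in>X. colim_class C A le Fo Fm z (fst p, Comp C h (snd p)))"

text \<open>Hom_{Pro(C)}(F, G) = lim_s colim_t Hom(F_t, G_s): compatible families of classes
  (extensional: empty outside B).\<close>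
definition pro_hom ::
  "('o, 'm) cat \<Rightarrow> 'a set \<Rightarrow> ('a \<Rightarrow> 'a \<Rightarrow> bool) \<Rightarrow> ('a \<Rightarrow> 'o) \<Rightarrow> ('a \<Rightarrow> 'a \<Rightarrow> 'm)
     \<Rightarrow> 'b set \<Rightarrow> ('b \<Rightarrow> 'b \<Rightarrow> bool) \<Rightarrow> ('b \<Rightarrow> 'o) \<Rightarrow> ('b \<Rightarrow> 'b \<Rightarrow> 'm)
     \<Rightarrow> ('b \<Rightarrow> ('a \<times> 'm) set) set" where
  "pro_hom C A leA Fo Fm B leB Go Gm =
     {x. (\<forall>s\<in>B. x s \<in> colim_hom C A leA Fo Fm (Go s)) \<and> (\<forall>s. s \<notin> B \<longrightarrow> x s = {}) \<and>
         (\<forall>s\<in>B. \<forall>s'\<in>B. leB s' s \<longrightarrow> x s' = colim_post C A leA Fo Fm (Go s') (Gm s s') (x s))}"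

text \<open>Pairs (\<alpha>, \<phi>): \<alpha> : B \<rightarrow> A strictly increasing, \<phi> : F \<circ> \<alpha> \<rightarrow> G natural
  (both extensional, i.e. undefined outside B).\<close>
definition probar_pairs ::
  "('o, 'm) cat \<Rightarrow> 'a set \<Rightarrow> ('a \<Rightarrow> 'a \<Rightarrow> bool) \<Rightarrow> ('a \<Rightarrow> 'o) \<Rightarrow> ('a \<Rightarrow> 'a \<Rightarrow> 'm)
     \<Rightarrow> 'b set \<Rightarrow> ('b \<Rightarrow> 'b \<Rightarrow> bool) \<Rightarrow> ('b \<Rightarrow> 'o) \<Rightarrow> ('b \<Rightarrow> 'b \<Rightarrow> 'm)
     \<Rightarrow> (('b \<Rightarrow> 'a) \<times> ('b \<Rightarrow> 'm)) set" where
  "probar_pairs C A leA Fo Fm B leB Go Gm =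
     {(\<alpha>, \<phi>).
        (\<forall>b\<in>B. \<alpha> b \<in> A) \<and> (\<forall>b. b \<notin> B \<longrightarrow> \<alpha> b = undefined \<and> \<phi> b = undefined) \<and>
        (\<forall>b\<in>B. \<forall>b'\<in>B. strict leB b b' \<longrightarrow> strict leA (\<alpha> b) (\<alpha> b')) \<and>
        (\<forall>b\<in>B. \<phi> b \<in> hom C (Fo (\<alpha> b)) (Go b)) \<and>
        (\<forall>b\<in>B. \<forall>b'\<in>B. leB b' b \<longrightarrow>
            Comp C (Gm b b') (\<phi> b) = Comp C (\<phi> b') (Fm (\<alpha> b) (\<alpha> b')))}"

definition probar_ge ::
  "('o, 'm) cat \<Rightarrow> ('a \<Rightarrow> 'a \<Rightarrow> bool) \<Rightarrow> ('a \<Rightarrow> 'a \<Rightarrow> 'm) \<Rightarrow> 'b set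
     \<Rightarrow> (('b \<Rightarrow> 'a) \<times> ('b \<Rightarrow> 'm)) \<Rightarrow> (('b \<Rightarrow> 'a) \<times> ('b \<Rightarrow> 'm)) \<Rightarrow> bool" where
  "probar_ge C leA Fm B p' p \<longleftrightarrow>
     (\<forall>b\<in>B. leA (fst p b) (fst p' b) \<and>
            snd p' b = Comp C (snd p b) (Fm (fst p' b) (fst p b)))"

definition probar_conn ::
  "('o, 'm) cat \<Rightarrow> 'a set \<Rightarrow> ('a \<Rightarrow> 'a \<Rightarrow> bool) \<Rightarrow> ('a \<Rightarrow> 'o) \<Rightarrow> ('a \<Rightarrow> 'a \<Rightarrow> 'm)
     \<Rightarrow> 'b set \<Rightarrow> ('b \<Rightarrow> 'b \<Rightarrow> bool) \<Rightarrow> ('b \<Rightarrow> 'o) \<Rightarrow> ('b \<Rightarrow> 'b \<Rightarrow> 'm)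
     \<Rightarrow> ((('b \<Rightarrow> 'a) \<times> ('b \<Rightarrow> 'm)) \<times> (('b \<Rightarrow> 'a) \<times> ('b \<Rightarrow> 'm))) set" where
  "probar_conn C A leA Fo Fm B leB Go Gm =
     (let P = probar_pairs C A leA Fo Fm B leB Go Gm;
          R = {(p, q). p \<in> P \<and> q \<in> P \<and> (probar_ge C leA Fm B p q \<or> probar_ge C leA Fm B q p)}
      in R\<^sup>*)"

definition probar_hom ::
  "('o, 'm) cat \<Rightarrow> 'a set \<Rightarrow> ('a \<Rightarrow> 'a \<Rightarrow> bool) \<Rightarrow> ('a \<Rightarrow> 'o) \<Rightarrow> ('a \<Rightarrow> 'a \<Rightarrow> 'm)
     \<Rightarrow> 'b set \<Rightarrow> ('b \<Rightarrow> 'b \<Rightarrow> bool) \<Rightarrow> ('b \<Rightarrow> 'o) \<Rightarrow> ('b \<Rightarrow> 'b \<Rightarrow> 'm)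
     \<Rightarrow> (('b \<Rightarrow> 'a) \<times> ('b \<Rightarrow> 'm)) set set" where
  "probar_hom C A leA Fo Fm B leB Go Gm =
     probar_pairs C A leA Fo Fm B leB Go Gm // probar_conn C A leA Fo Fm B leB Go Gm"

definition i_pair ::
  "('o, 'm) cat \<Rightarrow> 'a set \<Rightarrow> ('a \<Rightarrow> 'a \<Rightarrow> bool) \<Rightarrow> ('a \<Rightarrow> 'o) \<Rightarrow> ('a \<Rightarrow> 'a \<Rightarrow> 'm)
     \<Rightarrow> 'b set \<Rightarrow> ('b \<Rightarrow> 'o) \<Rightarrow> (('b \<Rightarrow> 'a) \<times> ('b \<Rightarrow> 'm)) \<Rightarrow> ('b \<Rightarrow> ('a \<times> 'm) set)" where
  "i_pair C A leA Fo Fm B Go p =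
     (\<lambda>s. if s \<in> B then colim_class C A leA Fo Fm (Go s) (fst p s, snd p s) else {})"

text \<open>i on a component [\<alpha>, \<phi>]: the common value of i_pair on its representatives.\<close>
definition i_hom ::
  "('o, 'm) cat \<Rightarrow> 'a set \<Rightarrow> ('a \<Rightarrow> 'a \<Rightarrow> bool) \<Rightarrow> ('a \<Rightarrow> 'o) \<Rightarrow> ('a \<Rightarrow> 'a \<Rightarrow> 'm)
     \<Rightarrow> 'b set \<Rightarrow> ('b \<Rightarrow> 'o) \<Rightarrow> (('b \<Rightarrow> 'a) \<times> ('b \<Rightarrow> 'm)) set \<Rightarrow> ('b \<Rightarrow> ('a \<times> 'm) set)" where
  "i_hom C A leA Fo Fm B Go c = the_elem (i_pair C A leA Fo Fm B Go ` c)"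

end

theory Submission
  imports Defs
begin

text \<open>
  Since \<open>B\<close> is cofinite, the strict order on \<open>B\<close> is well-founded, so we may choose
  representatives \<open>(\<alpha> b, \<phi> b) \<in> x\<^sub>b\<close> by well-founded recursion. At stage \<open>b\<close> only finitely many
  \<open>b' < b\<close> have been treated; the compatibility of \<open>x\<close> says that each earlier choice is identified
  in the colimit with the restriction of a representative of \<open>x\<^sub>b\<close>, and directedness lets us move
  the representative of \<open>x\<^sub>b\<close> to an index above all the finitely many identification witnesses.
  Since \<open>A\<close> has infinite height and finite down-sets it has no maximal element, so that index can
  be taken strictly above all earlier \<open>\<alpha> b'\<close>, making \<open>\<alpha>\<close> strictly increasing and \<open>\<phi>\<close> natural.
  Finally \<open>i\<close> is constant on connected components, so the component of \<open>(\<alpha>, \<phi>)\<close> maps to \<open>x\<close>.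
\<close>

lemma cat_comp_hom:
  "is_category C \<Longrightarrow> f \<in> hom C a b \<Longrightarrow> g \<in> hom C b c \<Longrightarrow> Comp C g f \<in> hom C a c"
  unfolding is_category_def hom_def by auto

lemma cat_comp_assoc:
  "is_category C \<Longrightarrow> f \<in> hom C a b \<Longrightarrow> g \<in> hom C b c \<Longrightarrow> h \<in> hom C c d
   \<Longrightarrow> Comp C h (Comp C g f) = Comp C (Comp C h g) f"
  unfolding is_category_def hom_def by auto

lemma cat_comp_ide_left: "is_category C \<Longrightarrow> f \<in> hom C a b \<Longrightarrow> Comp C (Ide C b) f = f"
  unfolding is_category_def hom_def by auto

lemma cat_comp_ide_right: "is_category C \<Longrightarrow> f \<in> hom C a b \<Longrightarrow> Comp C f (Ide C a) = f"
  unfolding is_category_def hom_def by auto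

section \<open>Cofinite directed posets of infinite height\<close>

lemma is_poset_refl: "is_poset A le \<Longrightarrow> u \<in> A \<Longrightarrow> le u u"
  unfolding is_poset_def by blast

lemma is_poset_antisym: "is_poset A le \<Longrightarrow> u \<in> A \<Longrightarrow> v \<in> A \<Longrightarrow> le u v \<Longrightarrow> le v u \<Longrightarrow> u = v"
  unfolding is_poset_def by blast

lemma is_poset_trans:
  "is_poset A le \<Longrightarrow> u \<in> A \<Longrightarrow> v \<in> A \<Longrightarrow> w \<in> A \<Longrightarrow> le u v \<Longrightarrow> le v w \<Longrightarrow> le u w"
  unfolding is_poset_def by blast

lemma strict_trans_left:
  assumes "is_poset A le" "u \<in> A" "v \<in> A" "w \<in> A" "le u v" "strict le v w"
  shows "strict le u w"
proof -
  have "le v w" using assms(6) unfolding strict_def by simp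
  then have "le u w" using is_poset_trans[OF assms(1-5)] by simp
  moreover have "u \<noteq> w"
  proof
    assume "u = w"
    then have "v = w" using is_poset_antisym[OF assms(1,3,4)] assms(5) \<open>le v w\<close> by simp
    then show False using assms(6) unfolding strict_def by simp
  qed
  ultimately show ?thesis unfolding strict_def by simp
qed

lemma directed_posetD: "directed_poset A le \<Longrightarrow> u \<in> A \<Longrightarrow> v \<in> A \<Longrightarrow> \<exists>w\<in>A. le u w \<and> le v w"
  unfolding directed_poset_def by blast

lemma directed_finite_upper_bound:
  assumes "is_poset A le" "directed_poset A le" "finite S" "S \<subseteq> A"
  shows "\<exists>u\<in>A. \<forall>s\<in>S. le s u"
  using assms(3,4)
proof (induction S rule: finite_induct)
  case empty
  then show ?case using assms(2) unfolding directed_poset_def by auto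
next
  case (insert a S)
  then obtain u where u: "u \<in> A" "\<forall>s\<in>S. le s u" by auto
  have "a \<in> A" using insert.prems by simp
  then obtain w where "w \<in> A" "le a w" "le u w"
    using directed_posetD[OF assms(2) _ u(1)] by blast
  moreover have "le s w" if "s \<in> S" for s
    using that u insert.prems is_poset_trans[OF assms(1), of s u w] \<open>w \<in> A\<close> \<open>le u w\<close> by auto
  ultimately show ?case by auto
qed

lemma strict_chain_le:
  assumes "is_poset A le" "\<forall>i\<le>n. c i \<in> A" "\<forall>i<n. strict le (c i) (c (Suc i))"
    and "i \<le> j" "j \<le> n"
  shows "le (c i) (c j)"
  using assms(4,5)
proof (induction j rule: dec_induct)
  case base
  then show ?case using assms(2) is_poset_refl[OF assms(1)] by blast
next
  case (step k)
  then have k: "k < n" by simp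
  have "c i \<in> A" "c k \<in> A" "c (Suc k) \<in> A" using assms(2) step.hyps k by auto
  moreover have "le (c i) (c k)" using step.IH k by simp
  moreover have "le (c k) (c (Suc k))" using assms(3) k unfolding strict_def by simp
  ultimately show ?case using is_poset_trans[OF assms(1)] by blast
qed

lemma strict_chain_inj:
  assumes "is_poset A le" "\<forall>i\<le>n. c i \<in> A" "\<forall>i<n. strict le (c i) (c (Suc i))"
  shows "inj_on c {..n}"
proof -
  have neq: "c i \<noteq> c j" if "i < j" "j \<le> n" for i j
  proof
    assume eq: "c i = c j"
    have "le (c (Suc i)) (c i)" using strict_chain_le[OF assms, of "Suc i" j] that eq by simp
    moreover have "le (c i) (c (Suc i))" "c i \<noteq> c (Suc i)"
      using assms(3) that unfolding strict_def by auto
    moreover have "c i \<in> A" "c (Suc i) \<in> A" using assms(2) that by auto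
    ultimately show False using is_poset_antisym[OF assms(1)] by blast
  qed
  show ?thesis
  proof (rule inj_onI)
    fix i j assume "i \<in> {..n}" "j \<in> {..n}" "c i = c j"
    then show "i = j" using neq[of i j] neq[of j i] by (cases i j rule: linorder_cases) auto
  qed
qed

lemma probar_index_no_maximal:
  assumes "is_poset A le" "cofinite_poset A le" "directed_poset A le" "infinite_height A le"
    and "u \<in> A"
  shows "\<exists>w\<in>A. strict le u w"
proof (rule ccontr)
  assume no_strict: "\<not> ?thesis"
  have top: "le v u" if v: "v \<in> A" for v
  proof -
    obtain w where w: "w \<in> A" "le u w" "le v w"
      using directed_posetD[OF assms(3,5) v] by blast
    have "w = u"
    proof (rule ccontr)
      assume "w \<noteq> u"
      then have "strict le u w" using w(2) unfolding strict_def by simp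
      then show False using no_strict w(1) by blast
    qed
    then show ?thesis using w(3) by simp
  qed
  define n where "n = card {v\<in>A. le v u}"
  obtain c where c: "\<forall>i\<le>n. c i \<in> A" "\<forall>i<n. strict le (c i) (c (Suc i))"
    using assms(4) unfolding infinite_height_def by blast
  have "c ` {..n} \<subseteq> {v\<in>A. le v u}" using c(1) top by blast
  moreover have "finite {v\<in>A. le v u}" using assms(2,5) unfolding cofinite_poset_def by blast
  ultimately have "card (c ` {..n}) \<le> n" unfolding n_def by (simp add: card_mono)
  moreover have "card (c ` {..n}) = Suc n"
    using card_image[OF strict_chain_inj[OF assms(1) c]] by simp
  ultimately show False by simp
qed

lemma probar_index_strict_upper_bound:
  assumes "is_poset A le" "cofinite_poset A le" "directed_poset A le" "infinite_height A le"
    and "finite S" "S \<subseteq> A"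
  shows "\<exists>U\<in>A. \<forall>s\<in>S. strict le s U"
proof -
  obtain u where u: "u \<in> A" "\<forall>s\<in>S. le s u"
    using directed_finite_upper_bound assms by blast
  obtain U where "U \<in> A" "strict le u U"
    using probar_index_no_maximal[OF assms(1-4) u(1)] by blast
  then show ?thesis
    using u assms(6) strict_trans_left[OF assms(1)] by blast
qed

lemma wf_strict_cofinite:
  assumes "is_poset B le" "cofinite_poset B le"
  shows "wf {(b', b). b \<in> B \<and> b' \<in> B \<and> strict le b' b}"
proof (rule wf_subset[OF wf_measure[of "\<lambda>b. card {u\<in>B. le u b}"]], clarify)
  fix b' b assume b: "b \<in> B" "b' \<in> B" "strict le b' b"
  have "{u\<in>B. le u b'} \<subseteq> {u\<in>B. le u b}"
    using b is_poset_trans[OF assms(1), of _ b' b] unfolding strict_def by blast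
  moreover have "b \<in> {u\<in>B. le u b} - {u\<in>B. le u b'}"
    using b is_poset_antisym[OF assms(1), of b b'] is_poset_refl[OF assms(1), of b]
    unfolding strict_def by blast
  ultimately have sub: "{u\<in>B. le u b'} \<subset> {u\<in>B. le u b}" by blast
  show "(b', b) \<in> measure (\<lambda>b. card {u\<in>B. le u b})"
    using psubset_card_mono[OF _ sub] assms(2) b(1) unfolding cofinite_poset_def by simp
qed

section \<open>Filtered colimits of hom-sets\<close>

locale directed_diagram =
  fixes C :: "('o, 'm) cat"
    and A :: "'a set" and le :: "'a \<Rightarrow> 'a \<Rightarrow> bool" and Fo :: "'a \<Rightarrow> 'o" and Fm :: "'a \<Rightarrow> 'a \<Rightarrow> 'm"
  assumes category: "is_category C"
    and poset: "is_poset A le"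
    and directed: "directed_poset A le"
    and diagram: "is_diagram C A le Fo Fm"
begin

abbreviation "cset y \<equiv> colim_set C A Fo y"
abbreviation "crel \<equiv> colim_rel C A le Fm"
abbreviation "ccls y \<equiv> colim_class C A le Fo Fm y"

lemma map_hom: "u \<in> A \<Longrightarrow> v \<in> A \<Longrightarrow> le v u \<Longrightarrow> Fm u v \<in> hom C (Fo u) (Fo v)"
  using diagram unfolding is_diagram_def by blast

lemma map_ide: "u \<in> A \<Longrightarrow> Fm u u = Ide C (Fo u)"
  using diagram unfolding is_diagram_def by blast

lemma comp_map_trans:
  assumes "f \<in> hom C (Fo t) y" "t \<in> A" "w \<in> A" "U \<in> A" "le t w" "le w U"
  shows "Comp C f (Fm U t) = Comp C (Comp C f (Fm w t)) (Fm U w)"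
proof -
  have "Fm U t = Comp C (Fm w t) (Fm U w)"
    using diagram assms unfolding is_diagram_def by blast
  then show ?thesis
    using cat_comp_assoc[OF category map_hom[of U w] map_hom[of w t] assms(1)] assms by simp
qed

lemma colim_rel_at_above:
  assumes "p \<in> cset y" "q \<in> cset y" "w \<in> A" "U \<in> A" "le (fst p) w" "le (fst q) w" "le w U"
    and "Comp C (snd p) (Fm w (fst p)) = Comp C (snd q) (Fm w (fst q))"
  shows "Comp C (snd p) (Fm U (fst p)) = Comp C (snd q) (Fm U (fst q))"
  using assms comp_map_trans[of "snd p" "fst p" y w U] comp_map_trans[of "snd q" "fst q" y w U]
  unfolding colim_set_def by auto

lemma colim_rel_refl:
  assumes "p \<in> cset y"
  shows "crel p p"
proof -
  have "fst p \<in> A" using assms unfolding colim_set_def by auto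
  then show ?thesis unfolding colim_rel_def using is_poset_refl[OF poset] by blast
qed

lemma colim_rel_sym: "crel p q \<Longrightarrow> crel q p"
  unfolding colim_rel_def by auto

lemma colim_rel_trans:
  assumes p: "p \<in> cset y" and q: "q \<in> cset y" and r: "r \<in> cset y"
    and "crel p q" "crel q r"
  shows "crel p r"
proof -
  obtain w1 where w1: "w1 \<in> A" "le (fst p) w1" "le (fst q) w1"
    "Comp C (snd p) (Fm w1 (fst p)) = Comp C (snd q) (Fm w1 (fst q))"
    using \<open>crel p q\<close> unfolding colim_rel_def by auto
  obtain w2 where w2: "w2 \<in> A" "le (fst q) w2" "le (fst r) w2"
    "Comp C (snd q) (Fm w2 (fst q)) = Comp C (snd r) (Fm w2 (fst r))"
    using \<open>crel q r\<close> unfolding colim_rel_def by auto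
  obtain U where U: "U \<in> A" "le w1 U" "le w2 U"
    using directed_posetD[OF directed w1(1) w2(1)] by blast
  have "fst p \<in> A" "fst r \<in> A" using p r unfolding colim_set_def by auto
  then have "le (fst p) U" "le (fst r) U"
    using is_poset_trans[OF poset] w1 w2 U by blast+
  moreover have "Comp C (snd p) (Fm U (fst p)) = Comp C (snd r) (Fm U (fst r))"
    using colim_rel_at_above[OF p q w1(1) U(1) w1(2,3) U(2) w1(4)]
      colim_rel_at_above[OF q r w2(1) U(1) w2(2,3) U(3) w2(4)] by simp
  ultimately show ?thesis unfolding colim_rel_def using U(1) by auto
qed

lemma colim_rel_restrict:
  assumes "(t, f) \<in> cset y" "U \<in> A" "le t U"
  shows "crel (U, Comp C f (Fm U t)) (t, f)"
proof -
  have "Comp C f (Fm U t) \<in> hom C (Fo U) y"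
    using assms cat_comp_hom[OF category map_hom] unfolding colim_set_def by blast
  then show ?thesis
    unfolding colim_rel_def using assms is_poset_refl[OF poset]
      map_ide cat_comp_ide_right[OF category]
    by (intro bexI[of _ U]) auto
qed

lemma mem_colim_class_iff: "q \<in> ccls y r \<longleftrightarrow> q \<in> cset y \<and> crel q r"
  unfolding colim_class_def by simp

lemma colim_rel_eventually_eq:
  assumes "p \<in> cset y" "q \<in> cset y" "crel p q"
  shows "\<exists>w\<in>A. \<forall>U\<in>A. le w U \<longrightarrow>
           Comp C (snd p) (Fm U (fst p)) = Comp C (snd q) (Fm U (fst q))"
  using assms(3) colim_rel_at_above[OF assms(1,2)] unfolding colim_rel_def by blast

lemma colim_class_eq:
  assumes "p \<in> cset y" "q \<in> cset y" "crel p q"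
  shows "ccls y p = ccls y q"
  using assms colim_rel_trans colim_rel_sym unfolding colim_class_def by blast

lemma colim_class_self: "p \<in> cset y \<Longrightarrow> p \<in> ccls y p"
  unfolding colim_class_def using colim_rel_refl by auto

context
  fixes B :: "'b set" and leB :: "'b \<Rightarrow> 'b \<Rightarrow> bool" and Go :: "'b \<Rightarrow> 'o" and Gm :: "'b \<Rightarrow> 'b \<Rightarrow> 'm"
begin

lemma i_pair_probar_ge:
  assumes "p \<in> probar_pairs C A le Fo Fm B leB Go Gm" "q \<in> probar_pairs C A le Fo Fm B leB Go Gm"
    and "probar_ge C le Fm B q p"
  shows "i_pair C A le Fo Fm B Go q = i_pair C A le Fo Fm B Go p"
proof
  fix s show "i_pair C A le Fo Fm B Go q s = i_pair C A le Fo Fm B Go p s"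
  proof (cases "s \<in> B")
    case True
    have p: "(fst p s, snd p s) \<in> cset (Go s)" and q: "(fst q s, snd q s) \<in> cset (Go s)"
      using assms(1,2) True unfolding probar_pairs_def colim_set_def by auto
    have le: "le (fst p s) (fst q s)"
      and eq: "snd q s = Comp C (snd p s) (Fm (fst q s) (fst p s))"
      using assms(3) True unfolding probar_ge_def by auto
    have "fst q s \<in> A" using q unfolding colim_set_def by simp
    from colim_rel_restrict[OF p this le]
    have "crel (fst q s, snd q s) (fst p s, snd p s)" by (simp only: eq)
    then have "ccls (Go s) (fst q s, snd q s) = ccls (Go s) (fst p s, snd p s)"
      by (rule colim_class_eq[OF q p])
    with True show ?thesis unfolding i_pair_def by simp
  next
    case False
    then show ?thesis unfolding i_pair_def by simp
  qed
qed

lemma i_pair_probar_conn: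
  assumes "(p, q) \<in> probar_conn C A le Fo Fm B leB Go Gm"
  shows "i_pair C A le Fo Fm B Go q = i_pair C A le Fo Fm B Go p"
  using assms unfolding probar_conn_def Let_def
proof (induction rule: rtrancl_induct)
  case base
  then show ?case by simp
next
  case (step q r)
  then have "q \<in> probar_pairs C A le Fo Fm B leB Go Gm" "r \<in> probar_pairs C A le Fo Fm B leB Go Gm"
    and "probar_ge C le Fm B q r \<or> probar_ge C le Fm B r q"
    by auto
  then have "i_pair C A le Fo Fm B Go r = i_pair C A le Fo Fm B Go q"
    using i_pair_probar_ge[of q r] i_pair_probar_ge[of r q] by metis
  with step.IH show ?case by simp
qed

lemma i_hom_probar_component:
  assumes "p \<in> probar_pairs C A le Fo Fm B leB Go Gm"
  shows "probar_conn C A le Fo Fm B leB Go Gm `` {p} \<in> probar_hom C A le Fo Fm B leB Go Gm"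
    and "i_hom C A le Fo Fm B Go (probar_conn C A le Fo Fm B leB Go Gm `` {p})
           = i_pair C A le Fo Fm B Go p"
proof -
  let ?c = "probar_conn C A le Fo Fm B leB Go Gm `` {p}"
  show "?c \<in> probar_hom C A le Fo Fm B leB Go Gm"
    unfolding probar_hom_def using assms by (auto simp: quotient_def)
  have "p \<in> ?c" unfolding probar_conn_def Let_def by simp
  then have "i_pair C A le Fo Fm B Go ` ?c = {i_pair C A le Fo Fm B Go p}"
    using i_pair_probar_conn by blast
  then show "i_hom C A le Fo Fm B Go ?c = i_pair C A le Fo Fm B Go p"
    unfolding i_hom_def by simp
qed

end

end

section \<open>Lifting a pro-morphism to a strictly increasing natural transformation\<close>

locale pro_morphism =
  fixes C :: "('o, 'm) cat"
    and A :: "'a set" and leA :: "'a \<Rightarrow> 'a \<Rightarrow> bool" and Fo :: "'a \<Rightarrow> 'o" and Fm :: "'a \<Rightarrow> 'a \<Rightarrow> 'm"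
    and B :: "'b set" and leB :: "'b \<Rightarrow> 'b \<Rightarrow> bool" and Go :: "'b \<Rightarrow> 'o" and Gm :: "'b \<Rightarrow> 'b \<Rightarrow> 'm"
    and x :: "'b \<Rightarrow> ('a \<times> 'm) set"
  assumes category: "is_category C"
    and source: "probar_obj C A leA Fo Fm"
    and target: "probar_obj C B leB Go Gm"
    and morphism: "x \<in> pro_hom C A leA Fo Fm B leB Go Gm"
begin

sublocale F: directed_diagram C A leA Fo Fm
  using category source unfolding probar_obj_def by unfold_locales auto

sublocale G: directed_diagram C B leB Go Gm
  using category target unfolding probar_obj_def by unfold_locales auto

lemma component_is_class: "s \<in> B \<Longrightarrow> \<exists>r\<in>F.cset (Go s). x s = F.ccls (Go s) r"
  using morphism unfolding pro_hom_def colim_hom_def by blast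

lemma component_outside: "s \<notin> B \<Longrightarrow> x s = {}"
  using morphism unfolding pro_hom_def by blast

lemma component_rel:
  assumes "s \<in> B" "p \<in> x s" "q \<in> x s"
  shows "p \<in> F.cset (Go s) \<and> F.crel p q"
proof -
  obtain r where r: "r \<in> F.cset (Go s)" "x s = F.ccls (Go s) r"
    using component_is_class[OF assms(1)] by blast
  then have p: "p \<in> F.cset (Go s)" "F.crel p r" and q: "q \<in> F.cset (Go s)" "F.crel q r"
    using assms(2,3) F.mem_colim_class_iff by auto
  then show ?thesis using F.colim_rel_trans[OF p(1) r(1) q(1) p(2) F.colim_rel_sym[OF q(2)]] by simp
qed

lemma component_eq_class:
  assumes "s \<in> B" "p \<in> x s"
  shows "x s = F.ccls (Go s) p"
proof -
  obtain r where r: "r \<in> F.cset (Go s)" "x s = F.ccls (Go s) r"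
    using component_is_class[OF assms(1)] by blast
  then have "p \<in> F.cset (Go s)" "F.crel p r" using assms(2) F.mem_colim_class_iff by auto
  then show ?thesis using F.colim_class_eq r by simp
qed

lemma component_restrict:
  assumes "b \<in> B" "b' \<in> B" "leB b' b" "(t, f) \<in> x b"
  shows "(t, Comp C (Gm b b') f) \<in> x b'"
proof -
  have "(t, f) \<in> F.cset (Go b)" using component_rel assms(1,4) by blast
  then have "(t, Comp C (Gm b b') f) \<in> F.cset (Go b')"
    using cat_comp_hom[OF category _ G.map_hom[OF assms(1-3)]] unfolding colim_set_def by auto
  then have "(t, Comp C (Gm b b') f) \<in> colim_post C A leA Fo Fm (Go b') (Gm b b') (x b)"
    using F.colim_class_self assms(4) unfolding colim_post_def by fastforce
  moreover have "x b' = colim_post C A leA Fo Fm (Go b') (Gm b b') (x b)"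
    using morphism assms(1-3) unfolding pro_hom_def by blast
  ultimately show ?thesis by simp
qed

lemma component_move_index:
  assumes "b \<in> B" "(t, f) \<in> x b" "U \<in> A" "leA t U"
  shows "(U, Comp C f (Fm U t)) \<in> x b"
proof -
  have tf: "(t, f) \<in> F.cset (Go b)" using component_rel assms(1,2) by blast
  then have "(U, Comp C f (Fm U t)) \<in> F.cset (Go b)"
    using cat_comp_hom[OF category F.map_hom[OF assms(3) _ assms(4)]] assms(3)
    unfolding colim_set_def by auto
  moreover have "F.crel (U, Comp C f (Fm U t)) (t, f)" using F.colim_rel_restrict[OF tf assms(3,4)] .
  ultimately show ?thesis
    using component_eq_class[OF assms(1,2)] F.mem_colim_class_iff by simp
qed

lemma component_restrict_eventually_eq:
  assumes "b \<in> B" "b' \<in> B" "leB b' b" "(t, f) \<in> x b" "q \<in> x b'"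
  shows "\<exists>w\<in>A. \<forall>U\<in>A. leA w U \<longrightarrow>
           Comp C (snd q) (Fm U (fst q)) = Comp C (Comp C (Gm b b') f) (Fm U t)"
proof -
  have restr: "(t, Comp C (Gm b b') f) \<in> x b'" using component_restrict[OF assms(1-4)] .
  have "q \<in> F.cset (Go b')" "F.crel q (t, Comp C (Gm b b') f)"
    using component_rel[OF assms(2,5) restr] by blast+
  moreover have "(t, Comp C (Gm b b') f) \<in> F.cset (Go b')"
    using component_rel[OF assms(2) restr restr] by blast
  ultimately show ?thesis
    using F.colim_rel_eventually_eq[of q "Go b'" "(t, Comp C (Gm b b') f)"] by simp
qed

lemma finite_strictly_below: "b \<in> B \<Longrightarrow> finite {b'\<in>B. strict leB b' b}"
  using finite_subset[of "{b'\<in>B. strict leB b' b}" "{u\<in>B. leB u b}"] target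
  unfolding strict_def probar_obj_def cofinite_poset_def by blast

definition compatible_lift :: "('b \<Rightarrow> 'a \<times> 'm) \<Rightarrow> 'b \<Rightarrow> 'a \<times> 'm \<Rightarrow> bool" where
  "compatible_lift g b p \<longleftrightarrow> p \<in> x b \<and>
     (\<forall>b'\<in>B. strict leB b' b \<longrightarrow> strict leA (fst (g b')) (fst p) \<and>
        Comp C (Gm b b') (snd p) = Comp C (snd (g b')) (Fm (fst p) (fst (g b'))))"

lemma exists_compatible_lift:
  assumes b: "b \<in> B" and g: "\<And>b'. b' \<in> B \<Longrightarrow> strict leB b' b \<Longrightarrow> g b' \<in> x b'"
  shows "\<exists>p. compatible_lift g b p"
proof -
  obtain t f where tf: "(t, f) \<in> x b" using component_is_class[OF b] F.colim_class_self by fast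
  then have t: "t \<in> A" and f: "f \<in> hom C (Fo t) (Go b)"
    using component_rel[OF b tf tf] unfolding colim_set_def by auto
  define D where "D = {b'\<in>B. strict leB b' b}"
  have "\<forall>b'\<in>D. \<exists>w. w \<in> A \<and> (\<forall>U\<in>A. leA w U \<longrightarrow>
      Comp C (snd (g b')) (Fm U (fst (g b'))) = Comp C (Comp C (Gm b b') f) (Fm U t))"
    using component_restrict_eventually_eq[OF b _ _ tf] g unfolding D_def strict_def by blast
  from bchoice[OF this] obtain w where w: "\<forall>b'\<in>D. w b' \<in> A \<and> (\<forall>U\<in>A. leA (w b') U \<longrightarrow>
      Comp C (snd (g b')) (Fm U (fst (g b'))) = Comp C (Comp C (Gm b b') f) (Fm U t))"
    by blast
  define S where "S = {t} \<union> w ` D \<union> (fst \<circ> g) ` D"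
  have "fst (g b') \<in> A" if "b' \<in> D" for b'
    using component_rel g that unfolding D_def colim_set_def by fastforce
  then have "S \<subseteq> A" using t w unfolding S_def by auto
  moreover have "finite S" using finite_strictly_below[OF b] unfolding S_def D_def by simp
  ultimately obtain U where U: "U \<in> A" "\<forall>s\<in>S. strict leA s U"
    using probar_index_strict_upper_bound[of A leA S] source unfolding probar_obj_def by blast
  have tU: "leA t U" using U unfolding S_def strict_def by simp
  have "compatible_lift g b (U, Comp C f (Fm U t))"
    unfolding compatible_lift_def fst_conv snd_conv
  proof (intro conjI ballI impI)
    show "(U, Comp C f (Fm U t)) \<in> x b" using component_move_index[OF b tf U(1) tU] .
  next
    fix b' assume "b' \<in> B" "strict leB b' b"
    then have b': "b' \<in> D" "b' \<in> B" "leB b' b" unfolding D_def strict_def by auto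
    then show "strict leA (fst (g b')) U" using U unfolding S_def by simp
    have "Comp C (Gm b b') (Comp C f (Fm U t)) = Comp C (Comp C (Gm b b') f) (Fm U t)"
      using cat_comp_assoc[OF category F.map_hom[OF U(1) t tU] f G.map_hom[OF b]] b' by simp
    also have "\<dots> = Comp C (snd (g b')) (Fm U (fst (g b')))"
    proof -
      have "w b' \<in> S" unfolding S_def using b' by simp
      then have "leA (w b') U" using U(2) unfolding strict_def by blast
      then show ?thesis using w b' U(1) by simp
    qed
    finally show "Comp C (Gm b b') (Comp C f (Fm U t)) = Comp C (snd (g b')) (Fm U (fst (g b')))" .
  qed
  then show ?thesis by blast
qed

definition below :: "('b \<times> 'b) set" where
  "below = {(b', b). b \<in> B \<and> b' \<in> B \<and> strict leB b' b}"

lemma wf_below: "wf below"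
  unfolding below_def using wf_strict_cofinite G.poset target unfolding probar_obj_def by blast

definition lift :: "'b \<Rightarrow> 'a \<times> 'm" where
  "lift = wfrec below (\<lambda>g b. SOME p. compatible_lift g b p)"

lemma lift_compatible: "b \<in> B \<Longrightarrow> compatible_lift lift b (lift b)"
proof (induction b rule: wf_induct[OF wf_below])
  case (1 b)
  have lower: "lift b' \<in> x b'" if "b' \<in> B" "strict leB b' b" for b'
    using 1 that unfolding below_def compatible_lift_def by blast
  have cut_eq: "compatible_lift (cut lift below b) b = compatible_lift lift b"
    unfolding compatible_lift_def cut_def below_def using 1(2) by auto
  have "lift b = (SOME p. compatible_lift lift b p)"
    using def_wfrec[OF lift_def[THEN eq_reflection] wf_below]
    by (simp add: cut_eq)
  then show ?case using someI_ex[OF exists_compatible_lift[OF 1(2) lower]] by simp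
qed

lemma lift_in_colim_set: "b \<in> B \<Longrightarrow> lift b \<in> x b \<and> lift b \<in> F.cset (Go b)"
  using lift_compatible component_rel unfolding compatible_lift_def by blast

definition lift_pair :: "('b \<Rightarrow> 'a) \<times> ('b \<Rightarrow> 'm)" where
  "lift_pair = (\<lambda>b. if b \<in> B then fst (lift b) else undefined,
                \<lambda>b. if b \<in> B then snd (lift b) else undefined)"

lemma lift_pair_in_pairs: "lift_pair \<in> probar_pairs C A leA Fo Fm B leB Go Gm"
  unfolding probar_pairs_def mem_Collect_eq case_prod_beta
proof (intro conjI ballI allI impI)
  fix b assume b: "b \<in> B"
  then show "fst lift_pair b \<in> A" "snd lift_pair b \<in> hom C (Fo (fst lift_pair b)) (Go b)"
    using lift_in_colim_set[OF b] b unfolding lift_pair_def colim_set_def by auto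
next
  fix b assume "b \<notin> B"
  then show "fst lift_pair b = undefined" "snd lift_pair b = undefined"
    unfolding lift_pair_def by auto
next
  fix b b' assume "b \<in> B" "b' \<in> B" "strict leB b b'"
  then show "strict leA (fst lift_pair b) (fst lift_pair b')"
    using lift_compatible[of b'] unfolding compatible_lift_def lift_pair_def by auto
next
  fix b b' assume b: "b \<in> B" "b' \<in> B" "leB b' b"
  show "Comp C (Gm b b') (snd lift_pair b)
          = Comp C (snd lift_pair b') (Fm (fst lift_pair b) (fst lift_pair b'))"
  proof (cases "b' = b")
    case True
    have "snd (lift b) \<in> hom C (Fo (fst (lift b))) (Go b)" "fst (lift b) \<in> A"
      using lift_in_colim_set[OF b(1)] unfolding colim_set_def by auto
    then show ?thesis
      using True b(1) G.map_ide F.map_ide cat_comp_ide_left[OF category] cat_comp_ide_right[OF category]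
      unfolding lift_pair_def by simp
  next
    case False
    then show ?thesis
      using lift_compatible[of b] b unfolding compatible_lift_def lift_pair_def strict_def by auto
  qed
qed

lemma i_pair_lift_pair: "i_pair C A leA Fo Fm B Go lift_pair = x"
proof
  fix s show "i_pair C A leA Fo Fm B Go lift_pair s = x s"
  proof (cases "s \<in> B")
    case True
    then show ?thesis
      using lift_in_colim_set[OF True] component_eq_class[OF True] unfolding i_pair_def lift_pair_def by simp
  next
    case False
    then show ?thesis using component_outside unfolding i_pair_def by simp
  qed
qed

end

theorem proposition3p4:
  fixes C :: "('o, 'm) cat"
    and A :: "'a set" and leA :: "'a \<Rightarrow> 'a \<Rightarrow> bool" and Fo :: "'a \<Rightarrow> 'o" and Fm :: "'a \<Rightarrow> 'a \<Rightarrow> 'm"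
    and B :: "'b set" and leB :: "'b \<Rightarrow> 'b \<Rightarrow> bool" and Go :: "'b \<Rightarrow> 'o" and Gm :: "'b \<Rightarrow> 'b \<Rightarrow> 'm"
  assumes "is_category C"
    and "probar_obj C A leA Fo Fm"
    and "probar_obj C B leB Go Gm"
    and "x \<in> pro_hom C A leA Fo Fm B leB Go Gm"
  shows "\<exists>c \<in> probar_hom C A leA Fo Fm B leB Go Gm. i_hom C A leA Fo Fm B Go c = x"
proof -
  interpret pro_morphism C A leA Fo Fm B leB Go Gm x
    using assms by unfold_locales
  show ?thesis
    using F.i_hom_probar_component[OF lift_pair_in_pairs] i_pair_lift_pair by metis
qed

end
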